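(* Let $p\ge 1$, let $F:\mathbb{R}^p\to\mathbb{R}^p$, $G(\boldsymbol{x}):=F(\boldsymbol{x})-\boldsymbol{x}$, and $\boldsymbol{x}^\ast\in\mathbb{R}^p$. Assume (A1): $G$ is differentiable in an open convex set $D$ containing $\boldsymbol{x}^\ast$, $G(\boldsymbol{x}^\ast)=0$, $dG(\boldsymbol{x}^\ast)$ is non-singular, and for some constants $d>0$ and $K$, $\|dG(\boldsymbol{x})-dG(\boldsymbol{x}^\ast)\|\le K\|\boldsymbol{x}-\boldsymbol{x}^\ast\|^d$ for all $\boldsymbol{x}\in D$. Suppose there exist a constant $\mu_2\ge 0$, a non-singular symmetric matrix $M\in\mathbb{R}^{p\times p}$ and a neighborhood $N'$ of $(\boldsymbol{x}^\ast,dG(\boldsymbol{x}^\ast)^{-1})$ such that for all $(\boldsymbol{x},H)\in N'$, with $\boldsymbol{v}=G(F(\boldsymbol{x}))-G(\boldsymbol{x})\ne 0$, $\frac{\|M\boldsymbol{v}-M^{-1}\boldsymbol{v}\|}{\|M^{-1}\boldsymbol{v}\|}\le\mu_2\|\boldsymbol{v}\|^d$. Let $\{(\boldsymbol{x}_k,H_k)\}$ be the iteration $\boldsymbol{x}_{k+1}=\boldsymbol{x}_k-H_kG(\boldsymbol{x}_k)$, $H_{k+1}=H_k-H_k\frac{\boldsymbol{v}_k\boldsymbol{v}_k^T}{\boldsymbol{v}_k^T\boldsymbol{v}_k}+\frac{\boldsymbol{u}_k\boldsymbol{v}_k^T}{\boldsymbol{v}_k^T\boldsymbol{v}_k}$,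 where $\boldsymbol{u}_k=F(\boldsymbol{x}_k)-\boldsymbol{x}_k$, $\boldsymbol{v}_k=G(F(\boldsymbol{x}_k))-G(\boldsymbol{x}_k)$, started with $(\boldsymbol{x}_0,H_0)$ sufficiently close to $(\boldsymbol{x}^\ast,dG(\boldsymbol{x}^\ast)^{-1})$ (in $\|\cdot\|$ and $\|\cdot\|_M$ respectively) that it is well-defined and converges to $\boldsymbol{x}^\ast$. If further $$\lim_{k\to\infty}\frac{\|\boldsymbol{x}_{k+1}-F(\boldsymbol{x}_k)\|}{\|\boldsymbol{x}_k-\boldsymbol{x}^\ast\|}=0,$$ then $\{\boldsymbol{x}_k\}$ converges to $\boldsymbol{x}^\ast$ Q-superlinearly.
   Context: $F$ is a majorization–minimization (MM) algorithm map and $G$ its residual; $dG$ denotes the Jacobian of $G$. $\|\cdot\|$ is a chosen vector norm on $\mathbb{R}^p$ and, for matrices, its induced operator norm; $\|A\|_M:=\|MAM\|_F$ with $\|\cdot\|_F$ the Frobenius norm. Standing assumption: the MM map is locally convergent to $\boldsymbol{x}^\ast$ in a neighborhood $S$ of $\boldsymbol{x}^\ast$ with linear rate $\tau$, i.e. $\|F(\boldsymbol{x})-\boldsymbol{x}^\ast\|\le\tau\|\boldsymbol{x}-\boldsymbol{x}^\ast\|$ for all $\boldsymbol{x}\in S$, with $\tau\in(0,1)$. Q-superlinear convergence means $\|\boldsymbol{x}_{k+1}-\boldsymbol{x}^\ast\|/\|\boldsymbol{x}_k-\boldsymbol{x}^\ast\|\to 0$ as $k\to\infty$. *)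

theory Defs
  imports "HOL-Analysis.Analysis"
begin

definition is_vec_norm :: "(real^'n \<Rightarrow> real) \<Rightarrow> bool" where
  "is_vec_norm N \<longleftrightarrow>
     (\<forall>x. 0 \<le> N x) \<and> (\<forall>x. N x = 0 \<longleftrightarrow> x = 0) \<and>
     (\<forall>c x. N (c *\<^sub>R x) = \<bar>c\<bar> * N x) \<and>
     (\<forall>x y. N (x + y) \<le> N x + N y)"

definition induced_opnorm :: "(real^'n \<Rightarrow> real) \<Rightarrow> real^'n^'n \<Rightarrow> real" where
  "induced_opnorm N A = (SUP x\<in>{x. x \<noteq> 0}. N (A *v x) / N x)"

definition frob_norm :: "real^'n^'n \<Rightarrow> real" where
  "frob_norm A = sqrt (\<Sum>i\<in>UNIV. \<Sum>j\<in>UNIV. (A $ i $ j)^2)"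

definition M_norm :: "real^'n^'n \<Rightarrow> real^'n^'n \<Rightarrow> real" where
  "M_norm M A = frob_norm (M ** A ** M)"

definition outer :: "real^'n \<Rightarrow> real^'n \<Rightarrow> real^'n^'n" where
  "outer u v = (\<chi> i j. u $ i * v $ j)"

end

theory Submission
  imports Defs "HOL-Library.Landau_Symbols"
begin

(* The update of H is a rank-one secant update,
     H_(k+1) = H_k + (u_k - H_k v_k) v_k^T / (v_k^T v_k),   so that H_(k+1) v_k = u_k.
   Let B = dG xs.  In the Frobenius norm (the norm of the type real^'n^'n), H_(k+1) - B^-1
   is the orthogonal projection of H_k - B^-1 onto the matrices annihilating v_k, plus a
   perturbation of size |u_k - B^-1 v_k| / |v_k|, which the Hoelder condition on dG bounds
   by O(|x_k - xs|^d).  Because x_(k+1) = F(x_k) + o(|x_k - xs|) and F contracts towards xs,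
   the iterates converge linearly, so these perturbations are summable and the Dennis-More
   argument yields |(H_k - B^-1) v_k| / |v_k| --> 0.  With r_k = x_(k+1) - F(x_k) and
   c_k = v_k^T u_k / v_k^T v_k the iteration gives the identity
     G(F(x_k)) = r_k - r_(k+1) + c_k (H_k v_k - u_k) - (H_(k+1) + I) (G(x_(k+1)) - G(F(x_k))),
   whose right-hand side is o(|x_k - xs|) since |c_k| <= |u_k| / |v_k|.  As B is invertible,
   F(x_k) - xs and hence x_(k+1) - xs are o(|x_k - xs|). *)

section \<open>Norms on \<open>real^n\<close>\<close>

lemma vec_norm_nonneg: "is_vec_norm N \<Longrightarrow> 0 \<le> N x"
  and vec_norm_zero: "is_vec_norm N \<Longrightarrow> N 0 = 0"
  and vec_norm_eq_0_iff: "is_vec_norm N \<Longrightarrow> N x = 0 \<longleftrightarrow> x = 0"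
  and vec_norm_scaleR: "is_vec_norm N \<Longrightarrow> N (c *\<^sub>R x) = \<bar>c\<bar> * N x"
  and vec_norm_triangle: "is_vec_norm N \<Longrightarrow> N (x + y) \<le> N x + N y"
  unfolding is_vec_norm_def by blast+

lemma vec_norm_sum:
  assumes "is_vec_norm N"
  shows "N (sum f A) \<le> (\<Sum>i\<in>A. N (f i))"
proof (induction A rule: infinite_finite_induct)
  case (insert a A)
  then show ?case using vec_norm_triangle[OF assms, of "f a" "sum f A"] by simp
qed (simp_all add: vec_norm_zero[OF assms])

lemma vec_norm_le_norm:
  fixes N :: "real^'n \<Rightarrow> real"
  assumes "is_vec_norm N"
  obtains C where "C > 0" "\<And>x. N x \<le> C * norm x"
proof
  define C where "C = 1 + (\<Sum>i\<in>UNIV. N (axis i 1))"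
  show "C > 0"
    unfolding C_def using vec_norm_nonneg[OF assms] by (simp add: add_pos_nonneg sum_nonneg)
  fix x :: "real^'n"
  have "N x = N (\<Sum>i\<in>UNIV. x $ i *\<^sub>R axis i 1)"
    by (simp add: basis_expansion scalar_mult_eq_scaleR[symmetric])
  also have "\<dots> \<le> (\<Sum>i\<in>UNIV. N (x $ i *\<^sub>R axis i 1))"
    by (rule vec_norm_sum[OF assms])
  also have "\<dots> = (\<Sum>i\<in>UNIV. \<bar>x $ i\<bar> * N (axis i 1))"
    by (simp add: vec_norm_scaleR[OF assms])
  also have "\<dots> \<le> (\<Sum>i\<in>UNIV. norm x * N (axis i 1))"
    by (intro sum_mono mult_right_mono component_le_norm_cart vec_norm_nonneg[OF assms])
  also have "\<dots> \<le> C * norm x"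
    unfolding C_def by (simp add: sum_distrib_left[symmetric] algebra_simps)
  finally show "N x \<le> C * norm x" .
qed

lemma norm_le_vec_norm:
  fixes N :: "real^'n \<Rightarrow> real"
  assumes "is_vec_norm N"
  obtains c where "c > 0" "\<And>x. c * norm x \<le> N x"
proof -
  obtain C where C: "C > 0" "\<And>x. N x \<le> C * norm x"
    using vec_norm_le_norm[OF assms] by blast
  have "N x \<le> N y + C * norm (x - y)" for x y
    using vec_norm_triangle[OF assms, of "x - y" y] C(2)[of "x - y"] by simp
  then have "\<bar>N x - N y\<bar> \<le> C * norm (x - y)" for x y
    by (smt (verit) norm_minus_commute)
  then have "continuous_on (sphere 0 1) N"
    using C(1) by (intro lipschitz_on_continuous_on[where L = C])
      (auto simp: lipschitz_on_def dist_norm)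
  moreover have "sphere (0::real^'n) 1 \<noteq> {}"
    using vector_choose_size[of 1] by auto
  ultimately obtain x0 where x0: "x0 \<in> sphere 0 1" "\<And>y. y \<in> sphere 0 1 \<Longrightarrow> N x0 \<le> N y"
    using continuous_attains_inf[OF compact_sphere] by blast
  show ?thesis
  proof
    show "N x0 > 0"
      using x0(1) vec_norm_nonneg[OF assms, of x0] vec_norm_eq_0_iff[OF assms, of x0] by auto
    fix x :: "real^'n"
    show "N x0 * norm x \<le> N x"
    proof (cases "x = 0")
      case False
      then have "N x0 \<le> N ((1 / norm x) *\<^sub>R x)" by (intro x0(2)) simp
      then show ?thesis using False by (simp add: vec_norm_scaleR[OF assms] field_simps)
    qed (simp add: vec_norm_nonneg[OF assms])
  qed
qed

lemma vec_norm_bigtheta: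
  fixes N :: "real^'n \<Rightarrow> real"
  assumes "is_vec_norm N"
  shows "(\<lambda>k. N (y k)) \<in> \<Theta>[F](\<lambda>k. norm (y k))"
proof -
  obtain C where C: "C > 0" "\<And>x. N x \<le> C * norm x" using vec_norm_le_norm[OF assms] by blast
  obtain c where c: "c > 0" "\<And>x. c * norm x \<le> N x" using norm_le_vec_norm[OF assms] by blast
  show ?thesis
  proof
    show "(\<lambda>k. N (y k)) \<in> O[F](\<lambda>k. norm (y k))"
      by (intro bigoI[of _ C] always_eventually) (simp add: vec_norm_nonneg[OF assms] C(2))
    show "(\<lambda>k. N (y k)) \<in> \<Omega>[F](\<lambda>k. norm (y k))"
      by (intro landau_omega.bigI[of c] always_eventually)
        (use c in \<open>auto simp: vec_norm_nonneg[OF assms]\<close>)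
  qed
qed

lemma vec_norm_landau_iff:
  fixes N :: "real^'n \<Rightarrow> real"
  assumes "is_vec_norm N"
  shows vec_norm_smallo_iff:
      "(\<lambda>k. N (f k)) \<in> o[F](\<lambda>k. N (g k)) \<longleftrightarrow> (\<lambda>k. norm (f k)) \<in> o[F](\<lambda>k. norm (g k))"
    and vec_norm_bigo_iff:
      "(\<lambda>k. N (f k)) \<in> O[F](\<lambda>k. N (g k)) \<longleftrightarrow> (\<lambda>k. norm (f k)) \<in> O[F](\<lambda>k. norm (g k))"
  using vec_norm_bigtheta[OF assms, of f F] vec_norm_bigtheta[OF assms, of g F]
  by (simp_all add: landau_o.small.in_cong_bigtheta landau_o.small.cong_bigtheta
      landau_o.big.in_cong_bigtheta landau_o.big.cong_bigtheta)

lemma norm_matrix_vector_le: "norm ((A::real^'n^'m) *v x) \<le> norm A * norm x"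
proof -
  have "(norm (A *v x))\<^sup>2 = (\<Sum>i\<in>UNIV. (inner (A $ i) x)\<^sup>2)"
    by (simp add: matrix_mult_dot norm_vec_def L2_set_def sum_nonneg)
  also have "\<dots> \<le> (\<Sum>i\<in>UNIV. (norm (A $ i))\<^sup>2 * (norm x)\<^sup>2)"
    by (intro sum_mono) (simp add: Cauchy_Schwarz_ineq power2_norm_eq_inner)
  also have "\<dots> = (norm A * norm x)\<^sup>2"
    by (simp add: norm_vec_def L2_set_def power_mult_distrib sum_distrib_right sum_nonneg)
  finally show ?thesis by (simp add: power2_le_iff_abs_le)
qed

lemma norm_le_induced_opnorm:
  assumes "is_vec_norm N"
  shows "N (A *v y) \<le> induced_opnorm N A * N y"
proof (cases "y = 0")
  case False
  obtain c where c: "c > 0" "\<And>x. c * norm x \<le> N x" using norm_le_vec_norm[OF assms] by blast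
  obtain C where C: "C > 0" "\<And>x. N x \<le> C * norm x" using vec_norm_le_norm[OF assms] by blast
  have "N (A *v x) / N x \<le> C * norm A / c" if "x \<noteq> 0" for x
  proof -
    have "N (A *v x) \<le> C * norm A * norm x"
      using C(2)[of "A *v x"] norm_matrix_vector_le[of A x] C(1)
      by (smt (verit) mult.assoc mult_left_mono)
    also have "\<dots> \<le> C * norm A * (N x / c)"
      using c(2)[of x] c(1) C(1) by (intro mult_left_mono) (simp_all add: field_simps)
    finally have "N (A *v x) \<le> C * norm A / c * N x" by simp
    moreover have "N x > 0"
      using that vec_norm_nonneg[OF assms, of x] vec_norm_eq_0_iff[OF assms, of x] by simp
    ultimately show ?thesis by (simp add: pos_divide_le_eq)
  qed
  then have "bdd_above ((\<lambda>x. N (A *v x) / N x) ` {x. x \<noteq> 0})"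
    by (intro bdd_aboveI2) auto
  then have "N (A *v y) / N y \<le> induced_opnorm N A"
    unfolding induced_opnorm_def by (rule cSUP_upper[rotated]) (use False in simp)
  moreover have "N y > 0"
    using False vec_norm_nonneg[OF assms, of y] vec_norm_eq_0_iff[OF assms, of y] by simp
  ultimately show ?thesis by (simp add: divide_le_eq)
qed (simp add: vec_norm_zero[OF assms])

lemma norm_hoelder_of_induced_opnorm_hoelder:
  fixes N :: "real^'n \<Rightarrow> real"
  assumes "is_vec_norm N" "0 \<le> d"
  obtains L where "0 \<le> L"
    "\<And>A z h. induced_opnorm N A \<le> K * N z powr d \<Longrightarrow> norm (A *v h) \<le> L * norm z powr d * norm h"
proof -
  obtain c where c: "c > 0" "\<And>x. c * norm x \<le> N x" using norm_le_vec_norm[OF assms(1)] by blast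
  obtain C where C: "C > 0" "\<And>x. N x \<le> C * norm x" using vec_norm_le_norm[OF assms(1)] by blast
  have bound: "norm (A *v h) \<le> \<bar>K\<bar> * C powr d * C / c * norm z powr d * norm h"
    if A: "induced_opnorm N A \<le> K * N z powr d" for A :: "real^'n^'n" and z h
  proof -
    have "c * norm (A *v h) \<le> N (A *v h)" by (rule c(2))
    also have "\<dots> \<le> induced_opnorm N A * N h" by (rule norm_le_induced_opnorm[OF assms(1)])
    also have "\<dots> \<le> \<bar>K\<bar> * N z powr d * N h"
      using A vec_norm_nonneg[OF assms(1), of h]
      by (intro mult_right_mono) (auto intro: order_trans[OF _ mult_right_mono[OF abs_ge_self]])
    also have "\<dots> \<le> \<bar>K\<bar> * (C * norm z) powr d * (C * norm h)"
      using C assms(2) vec_norm_nonneg[OF assms(1)]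
      by (intro mult_mono mult_left_mono powr_mono2) auto
    also have "\<dots> = c * (\<bar>K\<bar> * C powr d * C / c * norm z powr d * norm h)"
      using c C by (simp add: powr_mult)
    finally show ?thesis using c(1) by (simp add: field_simps)
  qed
  have "0 \<le> \<bar>K\<bar> * C powr d * C / c" using c C by simp
  from that[OF this bound] show ?thesis .
qed

section \<open>The rank-one secant update\<close>

lemma outer_mult_vector: "outer a b *v c = inner b c *\<^sub>R a"
  by (simp add: outer_def vec_eq_iff matrix_vector_mult_def inner_vec_def sum_distrib_left
      mult.commute mult.left_commute)

lemma matrix_mult_outer: "X ** outer a b = outer (X *v a) b"
  by (simp add: outer_def vec_eq_iff matrix_matrix_mult_def matrix_vector_mult_def
      sum_distrib_right mult.assoc)

lemma norm_outer: "norm (outer a b) = norm a * norm b"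
proof -
  have "(norm (outer a b))\<^sup>2 = (norm a * norm b)\<^sup>2"
    by (simp add: outer_def norm_vec_def L2_set_def sum_nonneg power_mult_distrib sum_product)
  then show ?thesis by (simp add: power2_eq_iff_nonneg)
qed

lemma outer_diff_left: "outer (a - b) c = outer a c - outer b c"
  by (simp add: outer_def vec_eq_iff algebra_simps)

definition secant_update :: "real^'n^'n \<Rightarrow> real^'n \<Rightarrow> real^'n \<Rightarrow> real^'n^'n" where
  "secant_update H u v =
     H - (1 / inner v v) *\<^sub>R (H ** outer v v) + (1 / inner v v) *\<^sub>R outer u v"

lemma secant_update_mult_vector:
  "secant_update H u v *v y = H *v y + (inner v y / inner v v) *\<^sub>R (u - H *v v)"
  by (simp add: secant_update_def matrix_mult_outer outer_mult_vector algebra_simps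
      matrix_vector_mult_add_rdistrib matrix_vector_mult_diff_rdistrib
      scaleR_matrix_vector_assoc[symmetric])

lemma secant_update_secant: "v \<noteq> 0 \<Longrightarrow> secant_update H u v *v v = u"
  by (simp add: secant_update_mult_vector)

lemma secant_update_diff:
  "secant_update H u v - A = secant_update (H - A) (u - A *v v) v"
  by (simp add: secant_update_def matrix_mult_outer outer_diff_left algebra_simps
      matrix_vector_mult_diff_rdistrib)

lemma norm_secant_update_zero:
  fixes X :: "real^'n^'n"
  assumes "v \<noteq> 0"
  shows "(norm (secant_update X 0 v))\<^sup>2 = (norm X)\<^sup>2 - (norm (X *v v) / norm v)\<^sup>2"
proof -
  have vv: "inner v v = (norm v)\<^sup>2" by (simp add: power2_norm_eq_inner)
  have row: "(norm (X $ i - (inner (X $ i) v / inner v v) *\<^sub>R v))\<^sup>2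
      = (norm (X $ i))\<^sup>2 - (inner (X $ i) v)\<^sup>2 / inner v v" for i
  proof -
    have "inner v v \<noteq> 0" using assms by simp
    then show ?thesis
      unfolding power2_norm_eq_inner
      by (simp add: inner_diff_left inner_diff_right inner_commute power2_eq_square field_simps)
  qed
  have rows: "(norm Y)\<^sup>2 = (\<Sum>i\<in>UNIV. (norm (Y $ i))\<^sup>2)" for Y :: "real^'n^'n"
    by (simp add: norm_vec_def L2_set_def sum_nonneg)
  have "secant_update X 0 v $ i = X $ i - (inner (X $ i) v / inner v v) *\<^sub>R v" for i
    unfolding secant_update_def matrix_mult_outer
    by (simp add: outer_def vec_eq_iff matrix_mult_dot inner_commute)
  then have "(norm (secant_update X 0 v))\<^sup>2
      = (\<Sum>i\<in>UNIV. (norm (X $ i))\<^sup>2 - (inner (X $ i) v)\<^sup>2 / inner v v)"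
    by (simp only: rows[of "secant_update X 0 v"] row)
  also have "\<dots> = (norm X)\<^sup>2 - (norm (X *v v))\<^sup>2 / inner v v"
    by (simp add: rows[of X] sum_subtractf sum_divide_distrib norm_vec_def L2_set_def
        sum_nonneg matrix_mult_dot)
  finally show ?thesis by (simp add: vv power_divide)
qed

lemma norm_secant_update_le:
  fixes X :: "real^'n^'n"
  assumes "v \<noteq> 0"
  shows "norm (secant_update X u v)
    \<le> sqrt ((norm X)\<^sup>2 - (norm (X *v v) / norm v)\<^sup>2) + norm u / norm v"
proof -
  have "secant_update X u v = secant_update X 0 v + (1 / inner v v) *\<^sub>R outer u v"
    by (simp add: secant_update_def outer_def vec_eq_iff)
  moreover have "norm ((1 / inner v v) *\<^sub>R outer u v) = norm u / norm v"
    using assms by (simp add: norm_outer power2_norm_eq_inner[symmetric] power2_eq_square)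
  moreover have "norm (secant_update X 0 v) = sqrt ((norm X)\<^sup>2 - (norm (X *v v) / norm v)\<^sup>2)"
    using norm_secant_update_zero[OF assms] by (metis norm_ge_zero real_sqrt_unique)
  ultimately show ?thesis by (metis norm_triangle_ineq)
qed

lemma matrix_inv_mult_vector:
  fixes A :: "real^'n^'n"
  assumes "invertible A"
  shows "matrix_inv A *v (A *v y) = y" "A *v (matrix_inv A *v y) = y"
proof -
  obtain A' where "A ** A' = mat 1 \<and> A' ** A = mat 1"
    using assms unfolding invertible_def by blast
  then have "A ** matrix_inv A = mat 1 \<and> matrix_inv A ** A = mat 1"
    unfolding matrix_inv_def by (rule someI)
  then show "matrix_inv A *v (A *v y) = y" "A *v (matrix_inv A *v y) = y"
    by (simp_all add: matrix_vector_mul_assoc)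
qed

section \<open>A perturbed Pythagorean recursion\<close>

lemma perturbed_sqrt_recursion:
  fixes a \<theta> \<epsilon> :: "nat \<Rightarrow> real"
  assumes step: "\<And>k. a (Suc k) \<le> sqrt ((a k)\<^sup>2 - (\<theta> k)\<^sup>2) + \<epsilon> k"
    and \<theta>: "\<And>k. 0 \<le> \<theta> k" "\<And>k. \<theta> k \<le> a k"
    and \<epsilon>: "summable \<epsilon>" "\<And>k. 0 \<le> \<epsilon> k"
  shows perturbed_sqrt_recursion_bounded: "a k \<le> a 0 + suminf \<epsilon>"
    and perturbed_sqrt_recursion_tendsto: "\<theta> \<longlonglongrightarrow> 0"
proof -
  define \<beta> where "\<beta> = a 0 + suminf \<epsilon>"
  define s where "s k = sqrt ((a k)\<^sup>2 - (\<theta> k)\<^sup>2)" for k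
  have s: "0 \<le> s k" "s k \<le> a k" for k
    unfolding s_def using \<theta>[of k] by (auto intro!: real_le_lsqrt)
  have s_sq: "(s k)\<^sup>2 = (a k)\<^sup>2 - (\<theta> k)\<^sup>2" for k
    unfolding s_def using \<theta>[of k] by (simp add: power_mono)
  have partial_sums: "(\<Sum>i<k. \<epsilon> i) \<le> suminf \<epsilon>" for k
    using \<epsilon> by (intro sum_le_suminf) auto
  have partial: "a k \<le> a 0 + (\<Sum>i<k. \<epsilon> i)" for k
  proof (induction k)
    case (Suc k)
    then show ?case using step[of k] s(2)[of k] unfolding s_def by simp
  qed simp
  have bounded: "a k \<le> \<beta>" for k
    using partial[of k] partial_sums[of k] unfolding \<beta>_def by linarith
  then show "a k \<le> a 0 + suminf \<epsilon>" unfolding \<beta>_def .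
  have "(\<theta> k)\<^sup>2 \<le> 2 * \<beta> * (a k - a (Suc k) + \<epsilon> k)" for k
  proof -
    have "(\<theta> k)\<^sup>2 = (a k - s k) * (a k + s k)"
      using s_sq[of k] by (simp add: algebra_simps power2_eq_square)
    also have "\<dots> \<le> (a k - s k) * (2 * \<beta>)"
      using s[of k] bounded[of k] by (intro mult_left_mono) auto
    also have "\<dots> \<le> 2 * \<beta> * (a k - a (Suc k) + \<epsilon> k)"
    proof -
      have "0 \<le> \<beta>" using bounded[of 0] \<theta>[of 0] by linarith
      moreover have "a k - s k \<le> a k - a (Suc k) + \<epsilon> k"
        using step[of k] unfolding s_def by linarith
      ultimately show ?thesis by (simp add: mult.commute mult_left_mono)
    qed
    finally show ?thesis .
  qed
  then have "summable (\<lambda>k. (\<theta> k)\<^sup>2)"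
  proof (intro summableI_nonneg_bounded)
    fix n
    assume key: "\<And>k. (\<theta> k)\<^sup>2 \<le> 2 * \<beta> * (a k - a (Suc k) + \<epsilon> k)"
    have "(\<Sum>k<n. (\<theta> k)\<^sup>2) \<le> (\<Sum>k<n. 2 * \<beta> * (a k - a (Suc k) + \<epsilon> k))"
      by (intro sum_mono key)
    also have "\<dots> = 2 * \<beta> * (a 0 - a n + (\<Sum>k<n. \<epsilon> k))"
      by (simp add: sum_distrib_left[symmetric] sum.distrib sum_lessThan_telescope')
    also have "\<dots> \<le> 2 * \<beta> * (a 0 + suminf \<epsilon>)"
      using partial_sums[of n] \<theta>[of n] \<theta>[of 0] bounded[of 0]
      by (intro mult_left_mono) auto
    finally show "(\<Sum>k<n. (\<theta> k)\<^sup>2) \<le> 2 * \<beta> * (a 0 + suminf \<epsilon>)" .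
  qed simp
  then have "(\<lambda>k. sqrt ((\<theta> k)\<^sup>2)) \<longlonglongrightarrow> sqrt 0"
    by (intro tendsto_real_sqrt summable_LIMSEQ_zero)
  then show "\<theta> \<longlonglongrightarrow> 0" using \<theta>(1) by simp
qed

lemma summable_powr_of_eventually_contracting:
  fixes a :: "nat \<Rightarrow> real"
  assumes "0 \<le> q" "q < 1" "0 < d" "\<And>k. 0 \<le> a k"
    and "eventually (\<lambda>k. a (Suc k) \<le> q * a k) sequentially"
  shows "summable (\<lambda>k. a k powr d)"
proof -
  obtain N where N: "\<And>k. k \<ge> N \<Longrightarrow> a (Suc k) \<le> q * a k"
    using assms(5) unfolding eventually_sequentially by blast
  show ?thesis
  proof (rule summable_ratio_test[where c = "q powr d" and N = N])
    show "q powr d < 1" using powr_less_mono2[of d q 1] assms(1-3) by simp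
    fix k assume "k \<ge> N"
    then have "a (Suc k) powr d \<le> (q * a k) powr d"
      using N assms(3,4) by (intro powr_mono2) auto
    then show "norm (a (Suc k) powr d) \<le> q powr d * norm (a k powr d)"
      using assms(1,4) by (simp add: powr_mult)
  qed
qed

lemma perturbed_contraction_summable:
  fixes N :: "real^'n \<Rightarrow> real"
  assumes "is_vec_norm N" "0 \<le> \<tau>" "\<tau> < 1" "0 < d"
    and contraction: "eventually (\<lambda>k. N (y k - a) \<le> \<tau> * N (x k - a)) sequentially"
    and perturbation: "(\<lambda>k. N (x (Suc k) - y k)) \<in> o(\<lambda>k. N (x k - a))"
  shows "summable (\<lambda>k. norm (x k - a) powr d)"
proof -
  have "eventually (\<lambda>k. N (x (Suc k) - y k) \<le> (1 - \<tau>) / 2 * N (x k - a)) sequentially"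
    using landau_o.smallD[OF perturbation, of "(1 - \<tau>) / 2"] assms(3)
    by (simp add: vec_norm_nonneg[OF assms(1)])
  with contraction
  have "eventually (\<lambda>k. N (x (Suc k) - a) \<le> (1 + \<tau>) / 2 * N (x k - a)) sequentially"
  proof eventually_elim
    case (elim k)
    have "N (x (Suc k) - a) \<le> N (x (Suc k) - y k) + N (y k - a)"
      using vec_norm_triangle[OF assms(1), of "x (Suc k) - y k" "y k - a"] by simp
    with elim show ?case by (simp add: field_simps)
  qed
  then have summable_N: "summable (\<lambda>k. N (x k - a) powr d)"
    using assms(2-4)
    by (intro summable_powr_of_eventually_contracting[where q = "(1 + \<tau>) / 2"]
        vec_norm_nonneg[OF assms(1)]) auto
  have "(\<lambda>k. norm (x k - a)) \<in> \<Theta>(\<lambda>k. N (x k - a))"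
    using vec_norm_bigtheta[OF assms(1)] by (subst bigtheta_sym)
  then have "(\<lambda>k. \<bar>norm (x k - a)\<bar> powr d) \<in> O(\<lambda>k. \<bar>N (x k - a)\<bar> powr d)"
    using assms(4) by (intro bigo_powr bigthetaD1) auto
  then have "(\<lambda>k. norm (x k - a) powr d) \<in> O(\<lambda>k. N (x k - a) powr d)"
    by (simp add: abs_of_nonneg[OF vec_norm_nonneg[OF assms(1)]])
  then show ?thesis
    by (rule summable_comparison_test_bigo[rotated]) (simp add: summable_N)
qed

lemma norm_in_smallo_of_le:
  assumes "\<And>x. norm (f x) \<le> g x" "g \<in> o[F](h)"
  shows "(\<lambda>x. norm (f x)) \<in> o[F](h)"
  by (rule landau_o.big_small_trans[OF bigoI[of _ 1] assms(2)])
    (auto intro!: always_eventually order_trans[OF assms(1)])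

lemma norm_in_bigo_of_le:
  assumes "\<And>x. norm (f x) \<le> g x" "g \<in> O[F](h)"
  shows "(\<lambda>x. norm (f x)) \<in> O[F](h)"
  by (rule landau_o.big_trans[OF bigoI[of _ 1] assms(2)])
    (auto intro!: always_eventually order_trans[OF assms(1)])

lemma norm_add_in_smallo:
  assumes "(\<lambda>x. norm (f x)) \<in> o[F](h)" "(\<lambda>x. norm (g x)) \<in> o[F](h)"
  shows "(\<lambda>x. norm (f x + g x)) \<in> o[F](h)" "(\<lambda>x. norm (f x - g x)) \<in> o[F](h)"
  using sum_in_smallo(1)[OF assms]
  by (auto intro: norm_in_smallo_of_le norm_triangle_ineq norm_triangle_ineq4)

lemma norm_add_in_bigo:
  assumes "(\<lambda>x. norm (f x)) \<in> O[F](h)" "(\<lambda>x. norm (g x)) \<in> O[F](h)"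
  shows "(\<lambda>x. norm (f x + g x)) \<in> O[F](h)" "(\<lambda>x. norm (f x - g x)) \<in> O[F](h)"
  using sum_in_bigo(1)[OF assms]
  by (auto intro: norm_in_bigo_of_le norm_triangle_ineq norm_triangle_ineq4)

lemma norm_matrix_vector_in_bigo:
  fixes A :: "real^'n^'m"
  shows "(\<lambda>x. norm (A *v f x)) \<in> O[F](\<lambda>x. norm (f x))"
  by (intro bigoI[of _ "norm A"] always_eventually allI) (simp add: norm_matrix_vector_le)

lemma norm_in_bigo_invertible_matrix_vector:
  fixes A :: "real^'n^'n"
  assumes "invertible A"
  shows "(\<lambda>x. norm (f x)) \<in> O[F](\<lambda>x. norm (A *v f x))"
  using norm_matrix_vector_in_bigo[of "matrix_inv A" "\<lambda>x. A *v f x" F]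
  by (simp add: matrix_inv_mult_vector[OF assms])

lemma has_derivative_smallo:
  assumes "(f has_derivative f') (at a)" "(y \<longlongrightarrow> a) F"
  shows "(\<lambda>k. norm (f (y k) - f a - f' (y k - a))) \<in> o[F](\<lambda>k. norm (y k - a))"
proof (rule landau_o.smallI)
  fix c :: real assume "c > 0"
  then obtain \<delta> where "\<delta> > 0"
    and \<delta>: "\<And>z. norm (z - a) < \<delta> \<Longrightarrow> norm (f z - f a - f' (z - a)) \<le> c * norm (z - a)"
    using assms(1) unfolding has_derivative_within_alt by blast
  from tendstoD[OF assms(2) \<open>\<delta> > 0\<close>]
  show "eventually
      (\<lambda>k. norm (norm (f (y k) - f a - f' (y k - a))) \<le> c * norm (norm (y k - a))) F"
    by eventually_elim (simp add: \<delta> dist_norm)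
qed

lemma hoelder_mean_value:
  fixes f :: "real^'n \<Rightarrow> real^'m" and J :: "real^'n \<Rightarrow> real^'n^'m"
  assumes deriv: "\<And>z. z \<in> cball a \<rho> \<Longrightarrow> (f has_derivative (\<lambda>h. J z *v h)) (at z)"
    and hoelder:
      "\<And>z h. z \<in> cball a \<rho> \<Longrightarrow> norm ((J z - A) *v h) \<le> L * norm (z - a) powr d * norm h"
    and "0 \<le> L" "0 \<le> d" "y \<in> cball a \<rho>" "z \<in> cball a \<rho>"
  shows "norm ((f y - A *v y) - (f z - A *v z)) \<le> L * \<rho> powr d * norm (y - z)"
proof (rule differentiable_bound[where f' = "\<lambda>p h. (J p - A) *v h"])
  fix p assume p: "p \<in> cball a \<rho>"
  have "((\<lambda>z. f z - A *v z) has_derivative (\<lambda>h. J p *v h - A *v h)) (at p)"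
    using deriv[OF p] by (intro has_derivative_diff bounded_linear_imp_has_derivative) auto
  then show
    "((\<lambda>z. f z - A *v z) has_derivative (\<lambda>h. (J p - A) *v h)) (at p within cball a \<rho>)"
    by (simp add: matrix_vector_mult_diff_rdistrib has_derivative_at_withinI)
  have "norm (p - a) powr d \<le> \<rho> powr d"
    using p assms(4) by (intro powr_mono2) (auto simp: dist_norm norm_minus_commute)
  then have "norm ((J p - A) *v h) \<le> L * \<rho> powr d * norm h" for h
    using hoelder[OF p, of h] assms(3)
    by (smt (verit) mult_right_mono mult_left_mono norm_ge_zero)
  then show "onorm (\<lambda>h. (J p - A) *v h) \<le> L * \<rho> powr d"
    by (rule onorm_le)
qed (use assms in auto)

section \<open>Superlinear convergence of the secant iteration\<close>

locale secant_iteration =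
  fixes F G :: "real^'n \<Rightarrow> real^'n" and J :: "real^'n \<Rightarrow> real^'n^'n"
    and xs :: "real^'n" and D :: "(real^'n) set" and L d :: real
    and x :: "nat \<Rightarrow> real^'n" and H :: "nat \<Rightarrow> real^'n^'n"
  assumes G_def: "\<And>y. G y = F y - y"
    and D: "open D" "xs \<in> D"
    and G_deriv: "\<And>z. z \<in> D \<Longrightarrow> (G has_derivative (\<lambda>h. J z *v h)) (at z)"
    and J_hoelder:
      "\<And>z h. z \<in> D \<Longrightarrow> norm ((J z - J xs) *v h) \<le> L * norm (z - xs) powr d * norm h"
    and L_nonneg: "0 \<le> L" and d_nonneg: "0 \<le> d"
    and G_root: "G xs = 0"
    and J_invertible: "invertible (J xs)"
    and x_tendsto: "x \<longlonglongrightarrow> xs"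
    and v_nonzero: "\<And>k. G (F (x k)) - G (x k) \<noteq> 0"
    and x_step: "\<And>k. x (Suc k) = x k - H k *v G (x k)"
    and H_step: "\<And>k. H (Suc k) = secant_update (H k) (G (x k)) (G (F (x k)) - G (x k))"
    and inexact: "(\<lambda>k. norm (x (Suc k) - F (x k))) \<in> o(\<lambda>k. norm (x k - xs))"
    and F_bigo: "(\<lambda>k. norm (F (x k) - xs)) \<in> O(\<lambda>k. norm (x k - xs))"
    and summable_error: "summable (\<lambda>k. norm (x k - xs) powr d)"
begin

abbreviation B :: "real^'n^'n" where "B \<equiv> J xs"
abbreviation e :: "nat \<Rightarrow> real^'n" where "e k \<equiv> x k - xs"
abbreviation u :: "nat \<Rightarrow> real^'n" where "u k \<equiv> G (x k)"
abbreviation v :: "nat \<Rightarrow> real^'n" where "v k \<equiv> G (F (x k)) - G (x k)"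
abbreviation r :: "nat \<Rightarrow> real^'n" where "r k \<equiv> x (Suc k) - F (x k)"
abbreviation s :: "nat \<Rightarrow> real^'n" where "s k \<equiv> G (x (Suc k)) - G (F (x k))"
abbreviation R :: "real^'n \<Rightarrow> real^'n" where "R y \<equiv> G y - B *v (y - xs)"
abbreviation \<theta> :: "nat \<Rightarrow> real" where "\<theta> k \<equiv> norm ((H k - matrix_inv B) *v v k) / norm (v k)"
abbreviation \<epsilon> :: "nat \<Rightarrow> real" where "\<epsilon> k \<equiv> norm (u k - matrix_inv B *v v k) / norm (v k)"

lemma tendsto_of_bigo_error:
  assumes "(\<lambda>k. norm (y k - xs)) \<in> O(\<lambda>k. norm (e k))"
  shows "y \<longlonglongrightarrow> xs"
proof -
  obtain c where "eventually (\<lambda>k. norm (norm (y k - xs)) \<le> c * norm (norm (e k))) sequentially"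
    using landau_o.bigE[OF assms] by blast
  then have "eventually (\<lambda>k. norm (y k - xs) \<le> c * norm (e k)) sequentially" by simp
  moreover have "(\<lambda>k. c * norm (e k)) \<longlonglongrightarrow> 0"
    using tendsto_mult_right_zero[OF tendsto_norm_zero[OF LIM_zero[OF x_tendsto]]] .
  ultimately have "(\<lambda>k. y k - xs) \<longlonglongrightarrow> 0" by (rule Lim_null_comparison)
  then show ?thesis by (rule LIM_zero_cancel)
qed

lemma linearization_smallo:
  assumes "(\<lambda>k. norm (y k - xs)) \<in> O(\<lambda>k. norm (e k))"
  shows "(\<lambda>k. norm (R (y k))) \<in> o(\<lambda>k. norm (e k))"
  using has_derivative_smallo[OF G_deriv[OF D(2)] tendsto_of_bigo_error[OF assms]] assms
  by (simp add: G_root landau_o.small_big_trans)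

lemma error_Suc_bigo: "(\<lambda>k. norm (e (Suc k))) \<in> O(\<lambda>k. norm (e k))"
  using norm_add_in_bigo(1)[OF landau_o.small_imp_big[OF inexact] F_bigo] by simp

lemma u_bigo: "(\<lambda>k. norm (u k)) \<in> O(\<lambda>k. norm (e k))"
  using norm_add_in_bigo(2)[OF F_bigo landau_o.big_refl] by (simp add: G_def)

lemma r_Suc_smallo: "(\<lambda>k. norm (r (Suc k))) \<in> o(\<lambda>k. norm (e k))"
  using landau_o.small.compose[OF inexact filterlim_Suc] error_Suc_bigo
  by (rule landau_o.small_big_trans)

lemma s_smallo: "(\<lambda>k. norm (s k)) \<in> o(\<lambda>k. norm (e k))"
proof -
  have eq: "s k = B *v r k + (R (x (Suc k)) - R (F (x k)))" for k
    by (simp add: matrix_vector_mult_diff_distrib)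
  have "(\<lambda>k. norm (B *v r k)) \<in> o(\<lambda>k. norm (e k))"
    using norm_matrix_vector_in_bigo inexact by (rule landau_o.big_small_trans)
  then show ?thesis
    unfolding eq
    by (intro norm_add_in_smallo linearization_smallo[OF error_Suc_bigo]
        linearization_smallo[OF F_bigo])
qed

lemma v_linearization_smallo: "(\<lambda>k. norm (v k - B *v (B *v e k))) \<in> o(\<lambda>k. norm (e k))"
proof -
  have eq: "v k - B *v (B *v e k) = (R (F (x k)) - R (x k)) + B *v R (x k)" for k
    by (simp add: G_def matrix_vector_mult_diff_distrib)
  have R_x: "(\<lambda>k. norm (R (x k))) \<in> o(\<lambda>k. norm (e k))"
    using linearization_smallo[OF landau_o.big_refl] by simp
  moreover have "(\<lambda>k. norm (B *v R (x k))) \<in> o(\<lambda>k. norm (e k))"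
    using norm_matrix_vector_in_bigo R_x by (rule landau_o.big_small_trans)
  ultimately show ?thesis
    unfolding eq by (rule norm_add_in_smallo(1)[OF norm_add_in_smallo(2)[OF
          linearization_smallo[OF F_bigo]]])
qed

lemma error_bigo_v: "(\<lambda>k. norm (e k)) \<in> O(\<lambda>k. norm (v k))"
proof -
  have "(\<lambda>k. norm (e k)) \<in> O(\<lambda>k. norm (B *v (B *v e k)))"
    using norm_in_bigo_invertible_matrix_vector[OF J_invertible]
    by (rule landau_o.big_trans) (rule norm_in_bigo_invertible_matrix_vector[OF J_invertible])
  then obtain c where "c > 0"
    and c: "eventually (\<lambda>k. norm (e k) \<le> c * norm (B *v (B *v e k))) sequentially"
    by (auto elim: landau_o.bigE)
  from landau_o.smallD[OF v_linearization_smallo, of "1 / (2 * c)"] \<open>c > 0\<close>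
  have "eventually (\<lambda>k. norm (v k - B *v (B *v e k)) \<le> norm (e k) / (2 * c)) sequentially"
    by simp
  with c have "eventually (\<lambda>k. norm (e k) \<le> 2 * c * norm (v k)) sequentially"
  proof eventually_elim
    case (elim k)
    have "norm (B *v (B *v e k)) \<le> norm (v k) + norm (v k - B *v (B *v e k))"
      by (metis norm_triangle_sub norm_minus_commute)
    then have "norm (e k) \<le> c * norm (v k) + c * norm (v k - B *v (B *v e k))"
      using elim(1) mult_left_mono[of _ _ c] \<open>c > 0\<close> by (smt (verit) distrib_left)
    moreover have "c * norm (v k - B *v (B *v e k)) \<le> norm (e k) / 2"
      using elim(2) \<open>c > 0\<close> by (simp add: field_simps)
    ultimately show ?case by simp
  qed
  then show ?thesis by (intro bigoI[of _ "2 * c"]) auto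
qed

lemma v_sub_B_u_le:
  assumes "cball xs \<rho> \<subseteq> D" "norm (F (x k) - xs) \<le> \<rho>" "norm (e k) \<le> \<rho>"
  shows "norm (v k - B *v u k) \<le> L * \<rho> powr d * norm (u k)"
proof -
  have in_D: "z \<in> D" if "z \<in> cball xs \<rho>" for z using assms(1) that by blast
  have "norm ((G (F (x k)) - B *v F (x k)) - (G (x k) - B *v x k))
      \<le> L * \<rho> powr d * norm (F (x k) - x k)"
    using G_deriv[OF in_D] J_hoelder[OF in_D] L_nonneg d_nonneg assms(2,3)
    by (intro hoelder_mean_value[where J = J]) (auto simp: dist_norm norm_minus_commute)
  moreover have "(G (F (x k)) - B *v F (x k)) - (G (x k) - B *v x k) = v k - B *v u k"
    by (simp add: G_def matrix_vector_mult_diff_distrib)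
  moreover have "F (x k) - x k = u k" by (simp add: G_def)
  ultimately show ?thesis by simp
qed

lemma v_sub_B_u_bigo: "(\<lambda>k. norm (v k - B *v u k)) \<in> O(\<lambda>k. norm (e k) powr d * norm (u k))"
proof -
  obtain r0 where "r0 > 0" and r0: "cball xs r0 \<subseteq> D"
    using D open_contains_cball by blast
  obtain C where "C > 0"
    and "eventually (\<lambda>k. norm (norm (F (x k) - xs)) \<le> C * norm (norm (e k))) sequentially"
    using landau_o.bigE[OF F_bigo] by blast
  then have C: "eventually (\<lambda>k. norm (F (x k) - xs) \<le> C * norm (e k)) sequentially" by simp
  define \<rho> where "\<rho> k = max 1 C * norm (e k)" for k
  have "(\<lambda>k. max 1 C * norm (e k)) \<longlonglongrightarrow> 0"
    using tendsto_mult_right_zero[OF tendsto_norm_zero[OF LIM_zero[OF x_tendsto]]] .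
  from order_tendstoD(2)[OF this \<open>r0 > 0\<close>]
  have "eventually (\<lambda>k. \<rho> k \<le> r0) sequentially"
    unfolding \<rho>_def by (auto elim: eventually_mono)
  with C have "eventually (\<lambda>k. norm (v k - B *v u k)
      \<le> L * max 1 C powr d * (norm (e k) powr d * norm (u k))) sequentially"
  proof eventually_elim
    case (elim k)
    have "norm (e k) \<le> \<rho> k" "C * norm (e k) \<le> \<rho> k"
      unfolding \<rho>_def using mult_right_mono[of 1 "max 1 C" "norm (e k)"]
      by (simp_all add: mult_right_mono)
    then have "norm (v k - B *v u k) \<le> L * \<rho> k powr d * norm (u k)"
      using elim order_trans[OF subset_cball[OF elim(2)] r0] by (intro v_sub_B_u_le) auto
    moreover have "\<rho> k powr d = max 1 C powr d * norm (e k) powr d"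
      unfolding \<rho>_def by (simp add: powr_mult)
    ultimately show ?case by (simp add: mult.assoc)
  qed
  then show ?thesis by (intro bigoI) auto
qed

lemma secant_error_summable: "summable \<epsilon>"
proof (rule summable_comparison_test_bigo)
  show "summable (\<lambda>k. norm (norm (e k) powr d))"
    using summable_error by simp
  have "u k - matrix_inv B *v v k = matrix_inv B *v (B *v u k - v k)" for k
    by (simp add: matrix_vector_mult_diff_distrib matrix_inv_mult_vector[OF J_invertible])
  then have "(\<lambda>k. norm (u k - matrix_inv B *v v k)) \<in> O(\<lambda>k. norm (v k - B *v u k))"
    using norm_matrix_vector_in_bigo[of "matrix_inv B" "\<lambda>k. B *v u k - v k"]
    by (simp add: norm_minus_commute)
  also have "(\<lambda>k. norm (v k - B *v u k)) \<in> O(\<lambda>k. norm (e k) powr d * norm (u k))"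
    by (rule v_sub_B_u_bigo)
  also have "(\<lambda>k. norm (e k) powr d * norm (u k)) \<in> O(\<lambda>k. norm (e k) powr d * norm (v k))"
    using landau_o.big_trans[OF u_bigo error_bigo_v] by (rule landau_o.big.mult_left)
  finally have "(\<lambda>k. norm (u k - matrix_inv B *v v k) / norm (v k))
      \<in> O(\<lambda>k. norm (e k) powr d * norm (v k) / norm (v k))"
    using v_nonzero by (intro landau_o.big.divide_right) auto
  then show "\<epsilon> \<in> O(\<lambda>k. norm (e k) powr d)"
    using v_nonzero by simp
qed

lemma dennis_more:
  shows H_bounded: "bounded (range H)"
    and dennis_more_condition: "\<theta> \<longlonglongrightarrow> 0"
proof -
  define a where "a k = norm (H k - matrix_inv B)" for k
  have step: "a (Suc k) \<le> sqrt ((a k)\<^sup>2 - (\<theta> k)\<^sup>2) + \<epsilon> k" for k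
    unfolding a_def H_step secant_update_diff by (rule norm_secant_update_le[OF v_nonzero])
  have \<theta>_le: "0 \<le> \<theta> k" "\<theta> k \<le> a k" for k
    unfolding a_def using v_nonzero[of k] norm_matrix_vector_le[of "H k - matrix_inv B" "v k"]
    by (simp_all add: divide_le_eq)
  have \<epsilon>_summable: "summable \<epsilon>" "0 \<le> \<epsilon> k" for k
    using secant_error_summable by simp_all
  have "norm (H k) \<le> norm (matrix_inv B) + (a 0 + suminf \<epsilon>)" for k
    using perturbed_sqrt_recursion_bounded[OF step \<theta>_le \<epsilon>_summable, of k]
      norm_triangle_sub[of "H k" "matrix_inv B"]
    unfolding a_def by linarith
  then show "bounded (range H)"
    unfolding bounded_iff by blast
  show "\<theta> \<longlonglongrightarrow> 0"
    by (rule perturbed_sqrt_recursion_tendsto[OF step \<theta>_le \<epsilon>_summable])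
qed

lemma G_F_eq:
  "G (F (x k)) = r k - r (Suc k) + (inner (v k) (u k) / inner (v k) (v k)) *\<^sub>R (H k *v v k - u k)
     - (H (Suc k) *v s k + s k)"
proof -
  define c where "c = inner (v k) (u k) / inner (v k) (v k)"
  have r_eq: "r j = - (H j *v u j + u j)" for j
    using x_step[of j] by (simp add: G_def)
  have Hu: "H (Suc k) *v u k = H k *v u k + c *\<^sub>R (u k - H k *v v k)"
    unfolding H_step c_def by (rule secant_update_mult_vector)
  have Hv: "H (Suc k) *v v k = u k"
    unfolding H_step by (rule secant_update_secant[OF v_nonzero])
  have "- r (Suc k) = H (Suc k) *v G (F (x k)) + G (F (x k)) + (H (Suc k) *v s k + s k)"
    using r_eq[of "Suc k"] by (simp add: matrix_vector_mult_diff_distrib algebra_simps)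
  also have "H (Suc k) *v G (F (x k)) = H (Suc k) *v u k + H (Suc k) *v v k"
    by (simp add: matrix_vector_mult_diff_distrib)
  also have "\<dots> = - r k + c *\<^sub>R (u k - H k *v v k)"
    unfolding Hu Hv r_eq[of k] by simp
  finally show ?thesis unfolding c_def by (simp add: algebra_simps)
qed

lemma correction_term_le:
  "norm ((inner (v k) (u k) / inner (v k) (v k)) *\<^sub>R (H k *v v k - u k))
    \<le> norm (u k) * (\<theta> k + \<epsilon> k)"
proof -
  have "\<bar>inner (v k) (u k) / inner (v k) (v k)\<bar> = \<bar>inner (v k) (u k)\<bar> / (norm (v k))\<^sup>2"
    by (simp add: abs_divide dot_square_norm)
  also have "\<dots> \<le> norm (v k) * norm (u k) / (norm (v k))\<^sup>2"
    by (intro divide_right_mono Cauchy_Schwarz_ineq2) simp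
  also have "\<dots> = norm (u k) / norm (v k)"
    using v_nonzero[of k] by (simp add: power2_eq_square)
  finally have "\<bar>inner (v k) (u k) / inner (v k) (v k)\<bar> \<le> norm (u k) / norm (v k)" .
  moreover have "H k *v v k - u k = (H k - matrix_inv B) *v v k - (u k - matrix_inv B *v v k)"
    by (simp add: matrix_vector_mult_diff_rdistrib)
  then have "norm (H k *v v k - u k)
      \<le> norm ((H k - matrix_inv B) *v v k) + norm (u k - matrix_inv B *v v k)"
    by (metis norm_triangle_ineq4)
  then have "norm (H k *v v k - u k) \<le> (\<theta> k + \<epsilon> k) * norm (v k)"
    using v_nonzero[of k] by (simp add: distrib_right)
  ultimately have "norm ((inner (v k) (u k) / inner (v k) (v k)) *\<^sub>R (H k *v v k - u k))
      \<le> norm (u k) / norm (v k) * ((\<theta> k + \<epsilon> k) * norm (v k))"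
    unfolding norm_scaleR by (intro mult_mono) auto
  then show ?thesis using v_nonzero[of k] by simp
qed

lemma G_F_smallo: "(\<lambda>k. norm (G (F (x k)))) \<in> o(\<lambda>k. norm (e k))"
proof -
  define c where "c k = inner (v k) (u k) / inner (v k) (v k)" for k
  have \<theta>\<epsilon>: "(\<lambda>k. \<theta> k + \<epsilon> k) \<in> o(\<lambda>_. 1)"
    using tendsto_add_zero[OF dennis_more_condition summable_LIMSEQ_zero[OF secant_error_summable]]
    by (intro smalloI_tendsto) auto
  have "(\<lambda>k. norm (u k) * (\<theta> k + \<epsilon> k)) \<in> o(\<lambda>k. norm (e k))"
    using landau_o.big_small_mult[OF u_bigo \<theta>\<epsilon>] by simp
  then have correction: "(\<lambda>k. norm (c k *\<^sub>R (H k *v v k - u k))) \<in> o(\<lambda>k. norm (e k))"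
    unfolding c_def using correction_term_le by (rule norm_in_smallo_of_le[rotated])
  obtain \<beta> where \<beta>: "\<And>k. norm (H k) \<le> \<beta>"
    using H_bounded unfolding bounded_iff by blast
  then have "0 \<le> \<beta>" using norm_ge_zero[of "H 0"] by (meson order_trans)
  have "norm (H (Suc k) *v s k + s k) \<le> (\<beta> + 1) * norm (s k)" for k
  proof -
    have "norm (H (Suc k) *v s k + s k) \<le> norm (H (Suc k)) * norm (s k) + norm (s k)"
      using norm_triangle_ineq[of "H (Suc k) *v s k" "s k"]
        norm_matrix_vector_le[of "H (Suc k)" "s k"]
      by linarith
    also have "\<dots> \<le> (\<beta> + 1) * norm (s k)"
      using \<beta>[of "Suc k"] by (simp add: distrib_right mult_right_mono)
    finally show ?thesis .
  qed
  moreover have "(\<lambda>k. (\<beta> + 1) * norm (s k)) \<in> o(\<lambda>k. norm (e k))"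
    using s_smallo \<open>0 \<le> \<beta>\<close> by simp
  ultimately have "(\<lambda>k. norm (H (Suc k) *v s k + s k)) \<in> o(\<lambda>k. norm (e k))"
    by (rule norm_in_smallo_of_le)
  then have "(\<lambda>k. norm (r k - r (Suc k) + c k *\<^sub>R (H k *v v k - u k) - (H (Suc k) *v s k + s k)))
      \<in> o(\<lambda>k. norm (e k))"
    by (rule norm_add_in_smallo(2)[OF norm_add_in_smallo(1)[OF
          norm_add_in_smallo(2)[OF inexact r_Suc_smallo] correction]])
  moreover have "(\<lambda>k. norm (G (F (x k))))
      = (\<lambda>k. norm (r k - r (Suc k) + c k *\<^sub>R (H k *v v k - u k) - (H (Suc k) *v s k + s k)))"
    unfolding c_def by (intro ext arg_cong[where f = norm] G_F_eq)
  ultimately show ?thesis by simp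
qed

lemma F_smallo: "(\<lambda>k. norm (F (x k) - xs)) \<in> o(\<lambda>k. norm (e k))"
proof -
  have "B *v (F (x k) - xs) = G (F (x k)) - R (F (x k))" for k
    by simp
  then have "(\<lambda>k. norm (B *v (F (x k) - xs))) \<in> o(\<lambda>k. norm (e k))"
    using norm_add_in_smallo(2)[OF G_F_smallo linearization_smallo[OF F_bigo]] by simp
  with norm_in_bigo_invertible_matrix_vector[OF J_invertible] show ?thesis
    by (rule landau_o.big_small_trans)
qed

theorem superlinear: "(\<lambda>k. norm (e (Suc k))) \<in> o(\<lambda>k. norm (e k))"
  using norm_add_in_smallo(1)[OF inexact F_smallo] by simp

end

lemma secant_iteration_superlinear:
  fixes F G :: "real^'n \<Rightarrow> real^'n" and nv :: "real^'n \<Rightarrow> real"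
    and dG :: "real^'n \<Rightarrow> real^'n^'n" and x :: "nat \<Rightarrow> real^'n" and H :: "nat \<Rightarrow> real^'n^'n"
  assumes G_def: "\<And>y. G y = F y - y"
    and norm: "is_vec_norm nv"
    and S: "open S" "xs \<in> S" "0 \<le> \<tau>" "\<tau> < 1" "\<forall>y\<in>S. nv (F y - xs) \<le> \<tau> * nv (y - xs)"
    and D: "open D" "xs \<in> D"
    and G_deriv: "\<forall>y\<in>D. (G has_derivative (\<lambda>h. dG y *v h)) (at y)"
    and G_root: "G xs = 0"
    and dG_inv: "invertible (dG xs)"
    and d_pos: "0 < d"
    and dG_hoelder: "\<forall>y\<in>D. induced_opnorm nv (dG y - dG xs) \<le> K * nv (y - xs) powr d"
    and v_nonzero: "\<forall>k. G (F (x k)) - G (x k) \<noteq> 0"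
    and x_step: "\<forall>k. x (Suc k) = x k - H k *v G (x k)"
    and H_step: "\<forall>k. H (Suc k) = secant_update (H k) (F (x k) - x k) (G (F (x k)) - G (x k))"
    and x_tendsto: "x \<longlonglongrightarrow> xs"
    and x_ne: "\<forall>k. x k \<noteq> xs"
    and inexact: "(\<lambda>k. nv (x (Suc k) - F (x k)) / nv (x k - xs)) \<longlonglongrightarrow> 0"
  shows "(\<lambda>k. nv (x (Suc k) - xs) / nv (x k - xs)) \<longlonglongrightarrow> 0"
proof -
  obtain L where L: "0 \<le> L"
    "\<And>A z h. induced_opnorm nv A \<le> K * nv z powr d \<Longrightarrow> norm (A *v h) \<le> L * norm z powr d * norm h"
    using norm_hoelder_of_induced_opnorm_hoelder[OF norm less_imp_le[OF d_pos]] by blast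
  have nv_nonzero: "nv (x k - xs) \<noteq> 0" for k
    using x_ne vec_norm_eq_0_iff[OF norm] by simp
  have inexact_nv: "(\<lambda>k. nv (x (Suc k) - F (x k))) \<in> o(\<lambda>k. nv (x k - xs))"
    using inexact nv_nonzero by (intro smalloI_tendsto) auto
  have contraction: "eventually (\<lambda>k. nv (F (x k) - xs) \<le> \<tau> * nv (x k - xs)) sequentially"
    using topological_tendstoD[OF x_tendsto S(1,2)] S(5) by (auto elim: eventually_mono)
  then have "(\<lambda>k. nv (F (x k) - xs)) \<in> O(\<lambda>k. nv (x k - xs))"
    using S(3) by (intro bigoI[of _ \<tau>]) (auto simp: vec_norm_nonneg[OF norm] elim: eventually_mono)
  moreover have "H (Suc k) = secant_update (H k) (G (x k)) (G (F (x k)) - G (x k))" for k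
    using H_step by (simp add: G_def)
  ultimately interpret secant_iteration F G dG xs D L d x H
    using G_def D G_deriv L dG_hoelder d_pos G_root dG_inv x_tendsto v_nonzero x_step
      inexact_nv perturbed_contraction_summable[OF norm S(3,4) d_pos contraction inexact_nv]
    by unfold_locales (auto simp: vec_norm_landau_iff[OF norm])
  from superlinear have "(\<lambda>k. nv (x (Suc k) - xs)) \<in> o(\<lambda>k. nv (x k - xs))"
    by (simp add: vec_norm_landau_iff[OF norm])
  then show ?thesis by (rule smalloD_tendsto)
qed

theorem corollary2:
  fixes F :: "real^'n \<Rightarrow> real^'n"
    and nv :: "real^'n \<Rightarrow> real"
    and dG :: "real^'n \<Rightarrow> real^'n^'n"
    and xs :: "real^'n"
    and D S :: "(real^'n) set"
    and N' :: "((real^'n) \<times> (real^'n^'n)) set"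
    and M :: "real^'n^'n"
    and d K \<mu>2 \<tau> :: real
  defines "G \<equiv> (\<lambda>x. F x - x)"
  assumes norm: "is_vec_norm nv"
    and MM_conv: "open S" "xs \<in> S" "0 < \<tau>" "\<tau> < 1"
      "\<forall>x\<in>S. nv (F x - xs) \<le> \<tau> * nv (x - xs)"
    and D: "open D" "convex D" "xs \<in> D"
    and G_deriv: "\<forall>x\<in>D. (G has_derivative (\<lambda>h. dG x *v h)) (at x)"
    and G_root: "G xs = 0"
    and dG_inv: "invertible (dG xs)"
    and d_pos: "d > 0"
    and dG_hoelder: "\<forall>x\<in>D. induced_opnorm nv (dG x - dG xs) \<le> K * nv (x - xs) powr d"
    and mu2: "\<mu>2 \<ge> 0"
    and M: "invertible M" "transpose M = M"
    and N': "open N'" "(xs, matrix_inv (dG xs)) \<in> N'"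
    and cond: "\<forall>(x, H)\<in>N'. G (F x) - G x \<noteq> 0 \<longrightarrow>
         nv (M *v (G (F x) - G x) - matrix_inv M *v (G (F x) - G x))
           / nv (matrix_inv M *v (G (F x) - G x))
         \<le> \<mu>2 * nv (G (F x) - G x) powr d"
  shows "\<exists>\<epsilon>>0. \<exists>\<delta>>0. \<forall>(x :: nat \<Rightarrow> real^'n) (H :: nat \<Rightarrow> real^'n^'n).
     nv (x 0 - xs) < \<epsilon> \<and> M_norm M (H 0 - matrix_inv (dG xs)) < \<delta> \<and>
     (\<forall>k. G (F (x k)) - G (x k) \<noteq> 0) \<and>
     (\<forall>k. x (Suc k) = x k - H k *v G (x k)) \<and>
     (\<forall>k. H (Suc k) =
        H k - (1 / inner (G (F (x k)) - G (x k)) (G (F (x k)) - G (x k))) *\<^sub>R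
                 (H k ** outer (G (F (x k)) - G (x k)) (G (F (x k)) - G (x k)))
            + (1 / inner (G (F (x k)) - G (x k)) (G (F (x k)) - G (x k))) *\<^sub>R
                 outer (F (x k) - x k) (G (F (x k)) - G (x k))) \<and>
     x \<longlonglongrightarrow> xs \<and>
     (\<forall>k. x k \<noteq> xs) \<and>
     (\<lambda>k. nv (x (Suc k) - F (x k)) / nv (x k - xs)) \<longlonglongrightarrow> 0
     \<longrightarrow> (\<lambda>k. nv (x (Suc k) - xs) / nv (x k - xs)) \<longlonglongrightarrow> 0"
proof -
  have G_eq: "\<And>y. G y = F y - y" by (simp add: G_def)
  have "(\<lambda>k. nv (x (Suc k) - xs) / nv (x k - xs)) \<longlonglongrightarrow> 0"
    if "\<forall>k. G (F (x k)) - G (x k) \<noteq> 0" "\<forall>k. x (Suc k) = x k - H k *v G (x k)"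
      "\<forall>k. H (Suc k) = secant_update (H k) (F (x k) - x k) (G (F (x k)) - G (x k))"
      "x \<longlonglongrightarrow> xs" "\<forall>k. x k \<noteq> xs" "(\<lambda>k. nv (x (Suc k) - F (x k)) / nv (x k - xs)) \<longlonglongrightarrow> 0"
    for x H
    by (rule secant_iteration_superlinear[OF G_eq norm MM_conv(1,2) less_imp_le[OF MM_conv(3)]
          MM_conv(4,5) D(1,3) G_deriv G_root dG_inv d_pos dG_hoelder that])
  then show ?thesis
    unfolding secant_update_def by (intro exI[of _ "1::real"] conjI zero_less_one) blast
qed

end
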